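(* For every integer $n\ge 0$, $c_1(n)$ is odd if and only if $n=j(j+1)/2$ for some integer $j\ge 0$.
   Context: A partition of $n\ge 0$ is a finite multiset of positive integers (its parts) summing to $n$; the empty partition is the unique partition of $0$. For $n\ge 0$, $c_1(n)$ denotes the number of partitions $\lambda$ of $n$ such that either (a) all parts of $\lambda$ are distinct, or (b) there is an integer $j\ge 1$ such that each of the integers $1,2,\dots,2j-1$ appears in $\lambda$ at least twice, and every integer greater than $2j$ appears in $\lambda$ at most once (the integer $2j$ may appear any number of times, including zero). *)

theory Defs
  imports Main "HOL-Library.Multiset"
begin

definition is_partition :: "nat \<Rightarrow> nat multiset \<Rightarrow> bool" where
  "is_partition n p \<longleftrightarrow> (\<forall>x \<in># p. x > 0) \<and> sum_mset p = n"

definition partitions :: "nat \<Rightarrow> nat multiset set" where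
  "partitions n = {p. is_partition n p}"

definition distinct_parts :: "nat multiset \<Rightarrow> bool" where
  "distinct_parts p \<longleftrightarrow> (\<forall>x. count p x \<le> 1)"

definition cond_b :: "nat multiset \<Rightarrow> bool" where
  "cond_b p \<longleftrightarrow> (\<exists>j::nat. j \<ge> 1 \<and>
      (\<forall>i. 1 \<le> i \<and> i \<le> 2*j - 1 \<longrightarrow> count p i \<ge> 2) \<and>
      (\<forall>i. i > 2*j \<longrightarrow> count p i \<le> 1))"

definition c1 :: "nat \<Rightarrow> nat" where
  "c1 n = card {p \<in> partitions n. distinct_parts p \<or> cond_b p}"

end

theory Submission
  imports Defs "HOL-Library.Z2" "HOL-Computational_Algebra.Formal_Power_Series"
begin

text \<open>
  Over GF(2) we have 1/(1 - x) = 1/(1 + x), so, writing T(k) = k(k+1)/2 and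
  (q;q)_k = (1 + q)(1 + q^2)...(1 + q^k), the generating function of c_1 is modulo 2
    prod_{i>=1} (1 + q^i) + sum_{j>=1} q^{2T(2j-1)} prod_{i>2j} (1 + q^i) / (q;q)_{2j}.
  With V_k = q^{2T(k)} prod_{i>k} (1 + q^i) / (q;q)_k, the first term is V_0 and the j-th summand
  is V_{2j-1} + V_{2j}, because (1 + x)^2 = 1 + x^2; so the series is sum_k V_k.
  Euler's expansion prod_{i>k} (1 + q^i) = sum_m q^{km + T(m)} / (q;q)_m together with
  2T(k) + km + T(m) = T(k+m) + T(k) turns this into
    sum_s q^{T(s)} sum_{k+m=s} q^{T(k)} / ((q;q)_k (q;q)_m),
  and the inner sum is 1: it is the q-binomial theorem
  prod_{i<=s} (1 + q^i) = sum_k q^{T(k)} [s choose k]_q divided by (q;q)_s.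
  Hence the series is sum_s q^{T(s)}. To stay within formal power series, the infinite
  products are truncated at N = 2n and series are compared up to degree n.
\<close>

unbundle fps_syntax

section \<open>Power series over GF(2)\<close>

lemma fps_bit_add_self [simp]: "(f::bit fps) + f = 0"
  by (simp flip: mult_2 add: numeral_fps_const)

lemma fps_bit_add_self_left [simp]: "(f::bit fps) + (f + g) = g"
  by (simp flip: add.assoc)

lemma fps_bit_eq_iff_add_eq_0: "(f::bit fps) = g \<longleftrightarrow> f + g = 0"
  by (metis add.assoc add_0_left add_0_right fps_bit_add_self)

lemma fps_bit_square_one_plus: "(1 + f) * (1 + f) = 1 + (f * f :: bit fps)"
  by (subst fps_bit_eq_iff_add_eq_0) (simp add: algebra_simps)

lemma of_nat_bit: "(of_nat m :: bit) = (if odd m then 1 else 0)"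
  by (induct m) auto

abbreviation q :: "bit fps" where "q \<equiv> fps_X"

section \<open>Agreement of power series up to a given degree\<close>

definition fps_agree :: "nat \<Rightarrow> 'a::zero fps \<Rightarrow> 'a fps \<Rightarrow> bool" where
  "fps_agree n f g \<longleftrightarrow> (\<forall>m\<le>n. f $ m = g $ m)"

lemma fps_agree_refl [simp]: "fps_agree n f f"
  by (simp add: fps_agree_def)

lemma fps_agree_trans [trans]: "fps_agree n f g \<Longrightarrow> fps_agree n g h \<Longrightarrow> fps_agree n f h"
  by (simp add: fps_agree_def)

lemma fps_agree_mono: "n' \<le> n \<Longrightarrow> fps_agree n f g \<Longrightarrow> fps_agree n' f g"
  by (simp add: fps_agree_def)

lemma fps_agree_add:
  "fps_agree n f f' \<Longrightarrow> fps_agree n g g' \<Longrightarrow> fps_agree n (f + g) (f' + g')"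
  by (simp add: fps_agree_def)

lemma fps_agree_mult:
  fixes f f' g g' :: "'a::comm_semiring_0 fps"
  shows "fps_agree n f f' \<Longrightarrow> fps_agree n g g' \<Longrightarrow> fps_agree n (f * g) (f' * g')"
  unfolding fps_agree_def fps_mult_nth by (auto intro!: sum.cong)

lemma fps_agree_sum:
  "(\<And>i. i \<in> A \<Longrightarrow> fps_agree n (f i) (g i)) \<Longrightarrow> fps_agree n (sum f A) (sum g A)"
  unfolding fps_agree_def fps_sum_nth by (auto intro!: sum.cong)

lemma fps_agree_X_power_mult_0:
  fixes f :: "'a::comm_ring_1 fps"
  shows "n < k \<Longrightarrow> fps_agree n (fps_X ^ k * f) 0"
  unfolding fps_agree_def fps_X_power_mult_nth by auto

lemma fps_agree_sum_atMost_drop: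
  fixes c L :: nat
  assumes "c \<le> L" "\<And>m. c < m \<Longrightarrow> m \<le> L \<Longrightarrow> fps_agree n (f m) 0"
  shows "fps_agree n (\<Sum>m\<le>L. f m) (\<Sum>m\<le>c. f m)"
  using assms(1)
proof (induct L rule: dec_induct)
  case (step L')
  then have "fps_agree n ((\<Sum>m\<le>L'. f m) + f (Suc L')) ((\<Sum>m\<le>c. f m) + 0)"
    using assms(2) by (intro fps_agree_add) simp_all
  then show ?case by simp
qed simp

section \<open>q-Pochhammer products and the q-binomial theorem over GF(2)\<close>

definition tri :: "nat \<Rightarrow> nat" where "tri k = k * (k + 1) div 2"

lemma tri_0 [simp]: "tri 0 = 0"
  by (simp add: tri_def)

lemma tri_Suc: "tri (Suc k) = tri k + Suc k"
  unfolding tri_def by (induct k) auto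

lemma tri_add: "tri (a + b) = tri a + tri b + a * b"
  by (induct b) (simp_all add: tri_Suc)

lemma le_tri: "k \<le> tri k"
  by (induct k) (auto simp: tri_Suc)

lemma strict_mono_tri: "strict_mono tri"
  unfolding strict_mono_Suc_iff by (simp add: tri_Suc)

lemma sum_double_eq_tri: "(\<Sum>i\<in>{1..k}. 2 * i) = 2 * tri k"
  by (induct k) (simp_all add: tri_Suc)

text \<open>Over GF(2), 1 + q^i = 1 - q^i, so this is the q-Pochhammer symbol (q;q)_k.\<close>
definition qpoch :: "nat \<Rightarrow> bit fps" where
  "qpoch k = (\<Prod>i\<in>{1..k}. 1 + q ^ i)"

definition qpoch_tail :: "nat \<Rightarrow> nat \<Rightarrow> bit fps" where
  "qpoch_tail k N = (\<Prod>i\<in>{Suc k..N}. 1 + q ^ i)"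

lemma qpoch_0 [simp]: "qpoch 0 = 1"
  by (simp add: qpoch_def)

lemma qpoch_Suc: "qpoch (Suc k) = qpoch k * (1 + q ^ Suc k)"
  by (simp add: qpoch_def)

lemma qpoch_nth_0 [simp]: "qpoch k $ 0 = 1"
  by (induct k) (simp_all add: qpoch_Suc)

lemma inverse_qpoch_mult [simp]: "inverse (qpoch k) * qpoch k = 1"
  by (rule inverse_mult_eq_1) simp

lemma qpoch_mult_inverse [simp]: "qpoch k * inverse (qpoch k) = 1"
  by (rule inverse_mult_eq_1') simp

lemma inverse_qpoch_Suc: "inverse (qpoch (Suc k)) = inverse (qpoch k) * inverse (1 + q ^ Suc k)"
  by (simp add: qpoch_Suc fps_inverse_mult)

lemma inverse_qpoch_eq_mult: "inverse (qpoch k) = inverse (qpoch (Suc k)) * (1 + q ^ Suc k)"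
proof -
  have "inverse (1 + q ^ Suc k) * (1 + q ^ Suc k) = 1"
    by (rule inverse_mult_eq_1) simp
  then show ?thesis by (simp add: inverse_qpoch_Suc mult.assoc)
qed

lemma qpoch_tail_0: "qpoch_tail 0 N = qpoch N"
  by (simp add: qpoch_tail_def qpoch_def)

lemma qpoch_tail_eq_mult: "Suc k \<le> N \<Longrightarrow> qpoch_tail k N = (1 + q ^ Suc k) * qpoch_tail (Suc k) N"
  by (simp add: qpoch_tail_def atLeastAtMost_insertL [symmetric])

fun elem_sym :: "nat \<Rightarrow> nat \<Rightarrow> bit fps" where
  "elem_sym L 0 = 1"
| "elem_sym 0 (Suc m) = 0"
| "elem_sym (Suc L) (Suc m) = elem_sym L (Suc m) + q ^ Suc L * elem_sym L m"

lemma elem_sym_eq_0: "L < m \<Longrightarrow> elem_sym L m = 0"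
  by (induct L m rule: elem_sym.induct) auto

lemma elem_sym_diag: "elem_sym s s = q ^ tri s"
  by (induct s) (simp_all add: elem_sym_eq_0 tri_Suc power_add)

lemma prod_one_plus_eq_sum_elem_sym:
  "(\<Prod>i\<in>{1..L}. 1 + z * q ^ i) = (\<Sum>m\<le>L. z ^ m * elem_sym L m)"
proof (induct L)
  case (Suc L)
  have shift: "(\<Sum>m\<le>L. z ^ m * elem_sym L m) = 1 + (\<Sum>m\<le>L. z ^ Suc m * elem_sym L (Suc m))"
  proof -
    have "(\<Sum>m\<le>Suc L. z ^ m * elem_sym L m) = 1 + (\<Sum>m\<le>L. z ^ Suc m * elem_sym L (Suc m))"
      by (subst sum.atMost_Suc_shift) simp
    then show ?thesis by (simp add: elem_sym_eq_0)
  qed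
  have "(\<Prod>i\<in>{1..Suc L}. 1 + z * q ^ i) = (\<Sum>m\<le>L. z ^ m * elem_sym L m) * (1 + z * q ^ Suc L)"
    using Suc by simp
  also have "\<dots> = (\<Sum>m\<le>L. z ^ m * elem_sym L m) + (\<Sum>m\<le>L. z ^ Suc m * (q ^ Suc L * elem_sym L m))"
    by (simp add: sum_distrib_right sum_distrib_left algebra_simps sum.distrib)
  finally show ?case
    unfolding shift by (subst sum.atMost_Suc_shift) (simp add: algebra_simps sum.distrib)
qed simp

lemma sum_elem_sym: "(\<Sum>k\<le>s. elem_sym s k) = qpoch s"
  using prod_one_plus_eq_sum_elem_sym [where L = s and z = 1] by (simp add: qpoch_def)

lemma elem_sym_Suc_Suc':
  "elem_sym (Suc L) (Suc m) = q ^ Suc m * (elem_sym L (Suc m) + elem_sym L m)"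
proof (induct L arbitrary: m)
  case (Suc L)
  show ?case
  proof (cases m)
    case 0
    have "elem_sym (Suc (Suc L)) (Suc 0) = q * (elem_sym L (Suc 0) + 1) + q ^ Suc (Suc L)"
      using Suc [of 0] by simp
    also have "\<dots> = q * (elem_sym (Suc L) (Suc 0) + elem_sym (Suc L) 0)"
      by (simp add: algebra_simps)
    finally show ?thesis using 0 by simp
  next
    case (Suc m')
    have "elem_sym (Suc (Suc L)) (Suc m)
        = q ^ Suc m * (elem_sym L (Suc m) + elem_sym L m)
          + q ^ Suc (Suc L) * (q ^ m * (elem_sym L m + elem_sym L m'))"
      using Suc.hyps [of m] Suc.hyps [of m'] Suc by simp
    also have "\<dots> = q ^ Suc m * ((elem_sym L (Suc m) + q ^ Suc L * elem_sym L m)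
        + (elem_sym L m + q ^ Suc L * elem_sym L m'))"
      using Suc by (simp add: algebra_simps power_add)
    finally show ?thesis using Suc by simp
  qed
next
  case 0
  then show ?case by (cases m) simp_all
qed

lemma elem_sym_Suc_ratio:
  "(1 + q ^ Suc m) * elem_sym L (Suc m) = (q ^ Suc m + q ^ Suc L) * elem_sym L m"
proof -
  have "elem_sym (Suc L) (Suc m) + q ^ Suc m * (elem_sym L (Suc m) + elem_sym L m) = 0"
    using elem_sym_Suc_Suc' [of L m] by (simp only: fps_bit_eq_iff_add_eq_0 [symmetric])
  then show ?thesis
    by (subst fps_bit_eq_iff_add_eq_0) (simp add: algebra_simps)
qed

text \<open>That is, elem_sym L m tends to q^T(m) / (q;q)_m as L tends to infinity.\<close>
lemma fps_agree_elem_sym: "fps_agree L (elem_sym L m) (q ^ tri m * inverse (qpoch m))"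
proof (induct m)
  case (Suc m)
  have inv: "inverse (1 + q ^ Suc m) * (1 + q ^ Suc m) = 1"
    by (rule inverse_mult_eq_1) simp
  have "elem_sym L (Suc m) = inverse (1 + q ^ Suc m) * ((1 + q ^ Suc m) * elem_sym L (Suc m))"
    by (metis inv mult.assoc mult_1)
  also have "\<dots> = inverse (1 + q ^ Suc m) * ((q ^ Suc m + q ^ Suc L) * elem_sym L m)"
    by (simp only: elem_sym_Suc_ratio)
  also have "fps_agree L \<dots> (inverse (1 + q ^ Suc m) * (q ^ Suc m * (q ^ tri m * inverse (qpoch m)) + 0))"
    unfolding distrib_right
    by (intro fps_agree_mult fps_agree_add fps_agree_refl Suc fps_agree_X_power_mult_0) simp
  also have "\<dots> = q ^ tri (Suc m) * inverse (qpoch (Suc m))"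
    by (simp add: tri_Suc inverse_qpoch_Suc power_add algebra_simps)
  finally show ?case .
qed (simp add: tri_def)

lemma fps_bit_pascal_identity:
  assumes "u * v = w"
  shows "(a::bit fps) * u * (1 + v) + w * a * (1 + u) = a * u * (1 + w)"
  unfolding assms [symmetric] by (subst fps_bit_eq_iff_add_eq_0) (simp add: algebra_simps)

text \<open>The q-binomial theorem: elem_sym s k = q^T(k) [s choose k]_q.\<close>
lemma elem_sym_qbinomial:
  "k \<le> s \<Longrightarrow> elem_sym s k * qpoch k * qpoch (s - k) = q ^ tri k * qpoch s"
proof (induct s arbitrary: k)
  case (Suc s)
  show ?case
  proof (cases k)
    case (Suc k')
    show ?thesis
    proof (cases "k' = s")
      case True
      then show ?thesis using Suc by (simp add: elem_sym_diag)
    next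
      case False
      with Suc.prems Suc obtain d where sd: "s = Suc (k' + d)"
        by (metis Suc_le_mono le_neq_implies_less less_imp_Suc_add)
      have ih1: "elem_sym s (Suc k') * qpoch (Suc k') * qpoch d = q ^ tri (Suc k') * qpoch s"
        using Suc.hyps [of "Suc k'"] sd by simp
      have ih2: "elem_sym s k' * qpoch k' * qpoch (Suc d) = q ^ tri k' * qpoch s"
        using Suc.hyps [of k'] sd by simp
      have "elem_sym (Suc s) k * qpoch k * qpoch (Suc s - k)
          = (elem_sym s (Suc k') + q ^ Suc s * elem_sym s k') * qpoch (Suc k') * qpoch (Suc d)"
        using Suc sd by simp
      also have "\<dots> = (elem_sym s (Suc k') * qpoch (Suc k') * qpoch d) * (1 + q ^ Suc d)
                     + q ^ Suc s * (elem_sym s k' * qpoch k' * qpoch (Suc d)) * (1 + q ^ Suc k')"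
        by (simp only: distrib_right qpoch_Suc [of d] qpoch_Suc [of k']) (simp add: mult_ac)
      also have "\<dots> = (q ^ tri k' * qpoch s) * q ^ Suc k' * (1 + q ^ Suc d)
                     + q ^ Suc s * (q ^ tri k' * qpoch s) * (1 + q ^ Suc k')"
        by (simp only: ih1 ih2) (simp add: tri_Suc power_add mult_ac)
      also have "\<dots> = (q ^ tri k' * qpoch s) * q ^ Suc k' * (1 + q ^ Suc s)"
        by (rule fps_bit_pascal_identity) (simp add: sd flip: power_add)
      also have "\<dots> = q ^ tri k * qpoch (Suc s)"
        by (simp only: Suc tri_Suc qpoch_Suc power_add) (simp add: mult_ac)
      finally show ?thesis .
    qed
  qed simp
qed (simp add: tri_def)

lemma sum_q_tri_inverse_qpoch:
  "(\<Sum>k\<le>s. q ^ tri k * inverse (qpoch k) * inverse (qpoch (s - k))) = 1"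
proof -
  have "q ^ tri k * inverse (qpoch k) * inverse (qpoch (s - k)) = elem_sym s k * inverse (qpoch s)"
    if "k \<le> s" for k
  proof -
    have "q ^ tri k = elem_sym s k * qpoch k * qpoch (s - k) * inverse (qpoch s)"
      by (simp only: elem_sym_qbinomial [OF that]) (simp add: mult.assoc)
    then have "q ^ tri k * inverse (qpoch k) * inverse (qpoch (s - k))
        = elem_sym s k * inverse (qpoch s) * (qpoch k * inverse (qpoch k))
          * (qpoch (s - k) * inverse (qpoch (s - k)))"
      by (simp only: mult_ac)
    then show ?thesis by simp
  qed
  then have "(\<Sum>k\<le>s. q ^ tri k * inverse (qpoch k) * inverse (qpoch (s - k)))
      = (\<Sum>k\<le>s. elem_sym s k) * inverse (qpoch s)"
    by (simp add: sum_distrib_right)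
  then show ?thesis by (simp add: sum_elem_sym)
qed

section \<open>The generating function of c_1 modulo 2\<close>

lemma qpoch_tail_eq_sum_elem_sym:
  assumes "k \<le> N"
  shows "qpoch_tail k N = (\<Sum>m\<le>N - k. q ^ (k * m) * elem_sym (N - k) m)"
proof -
  have "qpoch_tail k N = (\<Prod>i\<in>{1 + k..(N - k) + k}. 1 + q ^ i)"
    unfolding qpoch_tail_def using assms by simp
  also have "\<dots> = (\<Prod>i\<in>{1..N - k}. 1 + q ^ k * q ^ i)"
    by (subst prod.shift_bounds_cl_nat_ivl) (simp add: power_add mult.commute)
  also have "\<dots> = (\<Sum>m\<le>N - k. (q ^ k) ^ m * elem_sym (N - k) m)"
    by (rule prod_one_plus_eq_sum_elem_sym)
  finally show ?thesis by (simp add: power_mult)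
qed

lemma fps_agree_qpoch_tail:
  assumes "k \<le> n" "2 * n \<le> N"
  shows "fps_agree n (qpoch_tail k N) (\<Sum>m\<le>n. q ^ (k * m + tri m) * inverse (qpoch m))"
proof -
  have kN: "k \<le> N" and nL: "n \<le> N - k" using assms by simp_all
  have "fps_agree n (qpoch_tail k N) (\<Sum>m\<le>N - k. q ^ (k * m) * (q ^ tri m * inverse (qpoch m)))"
    unfolding qpoch_tail_eq_sum_elem_sym [OF kN]
    by (intro fps_agree_sum fps_agree_mult fps_agree_refl fps_agree_mono [OF nL fps_agree_elem_sym])
  also have "fps_agree n \<dots> (\<Sum>m\<le>n. q ^ (k * m) * (q ^ tri m * inverse (qpoch m)))"
  proof (rule fps_agree_sum_atMost_drop [OF nL])
    fix m assume "n < m"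
    then have "n < k * m + tri m" using le_tri [of m] by linarith
    then show "fps_agree n (q ^ (k * m) * (q ^ tri m * inverse (qpoch m))) 0"
      using fps_agree_X_power_mult_0 [of n "k * m + tri m" "inverse (qpoch m)"]
      by (simp add: power_add mult.assoc)
  qed
  finally show ?thesis by (simp add: power_add mult.assoc)
qed

text \<open>The generating function of c_1 modulo 2, truncated at N: distinct parts, plus
  condition (b) for j = i + 1.\<close>
definition c1_series :: "nat \<Rightarrow> nat \<Rightarrow> bit fps" where
  "c1_series n N = qpoch N
     + (\<Sum>i<n. q ^ (2 * tri (2 * i + 1)) * qpoch_tail (2 * i + 2) N * inverse (qpoch (2 * i + 2)))"

text \<open>V_k of the proof idea, truncated at N.\<close>
definition tail_term :: "nat \<Rightarrow> nat \<Rightarrow> bit fps" where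
  "tail_term N k = q ^ (2 * tri k) * qpoch_tail k N * inverse (qpoch k)"

lemma tail_term_pair:
  assumes "2 * i + 2 \<le> N"
  shows "q ^ (2 * tri (2 * i + 1)) * qpoch_tail (2 * i + 2) N * inverse (qpoch (2 * i + 2))
    = tail_term N (2 * i + 1) + tail_term N (2 * i + 2)"
proof -
  let ?a = "q ^ (2 * i + 2)"
  have "qpoch_tail (2 * i + 1) N = (1 + ?a) * qpoch_tail (2 * i + 2) N"
    using qpoch_tail_eq_mult [of "2 * i + 1" N] assms by simp
  moreover have "inverse (qpoch (2 * i + 1)) = inverse (qpoch (2 * i + 2)) * (1 + ?a)"
    using inverse_qpoch_eq_mult [of "2 * i + 1"] by simp
  moreover have "2 * tri (2 * i + 2) = 2 * tri (2 * i + 1) + (2 * i + 2) + (2 * i + 2)"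
    using tri_Suc [of "2 * i + 1"] by simp
  ultimately have "tail_term N (2 * i + 1) = q ^ (2 * tri (2 * i + 1)) * ((1 + ?a) * (1 + ?a))
      * qpoch_tail (2 * i + 2) N * inverse (qpoch (2 * i + 2))"
    and "tail_term N (2 * i + 2) = q ^ (2 * tri (2 * i + 1)) * (?a * ?a)
      * qpoch_tail (2 * i + 2) N * inverse (qpoch (2 * i + 2))"
    unfolding tail_term_def by (simp_all only: mult_ac power_add)
  then show ?thesis
    by (subst fps_bit_eq_iff_add_eq_0) (simp add: fps_bit_square_one_plus algebra_simps)
qed

lemma c1_series_eq_sum_tail_term: "2 * n \<le> N \<Longrightarrow> c1_series n N = (\<Sum>k\<le>2 * n. tail_term N k)"
proof (induct n)
  case (Suc n)
  have "c1_series (Suc n) N = c1_series n N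
      + q ^ (2 * tri (2 * n + 1)) * qpoch_tail (2 * n + 2) N * inverse (qpoch (2 * n + 2))"
    by (simp add: c1_series_def add.assoc)
  also have "\<dots> = (\<Sum>k\<le>2 * n. tail_term N k) + (tail_term N (2 * n + 1) + tail_term N (2 * n + 2))"
    using Suc tail_term_pair [of n N] by simp
  finally show ?case by (simp add: add.assoc)
qed (simp add: c1_series_def tail_term_def qpoch_tail_0)

definition grid_term :: "nat \<Rightarrow> nat \<Rightarrow> bit fps" where
  "grid_term k m = q ^ (2 * tri k + k * m + tri m) * (inverse (qpoch k) * inverse (qpoch m))"

lemma fps_agree_sum_tail_term:
  assumes "2 * n \<le> N"
  shows "fps_agree n (\<Sum>k\<le>2 * n. tail_term N k) (\<Sum>k\<le>n. \<Sum>m\<le>n. grid_term k m)"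
proof -
  have "fps_agree n (\<Sum>k\<le>2 * n. tail_term N k) (\<Sum>k\<le>n. tail_term N k)"
  proof (rule fps_agree_sum_atMost_drop)
    fix k assume "n < k"
    then have "n < 2 * tri k" using le_tri [of k] by linarith
    then show "fps_agree n (tail_term N k) 0"
      unfolding tail_term_def mult.assoc by (rule fps_agree_X_power_mult_0)
  qed simp
  also have "fps_agree n \<dots> (\<Sum>k\<le>n. \<Sum>m\<le>n. grid_term k m)"
  proof (rule fps_agree_sum)
    fix k assume "k \<in> {..n}"
    then have "fps_agree n (tail_term N k)
        (q ^ (2 * tri k) * (\<Sum>m\<le>n. q ^ (k * m + tri m) * inverse (qpoch m)) * inverse (qpoch k))"
      unfolding tail_term_def using assms
      by (intro fps_agree_mult fps_agree_refl fps_agree_qpoch_tail) simp_all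
    also have "q ^ (2 * tri k) * (\<Sum>m\<le>n. q ^ (k * m + tri m) * inverse (qpoch m)) * inverse (qpoch k)
        = (\<Sum>m\<le>n. grid_term k m)"
      unfolding grid_term_def sum_distrib_left sum_distrib_right
      by (rule sum.cong) (simp_all only: power_add mult_ac)
    finally show "fps_agree n (tail_term N k) (\<Sum>m\<le>n. grid_term k m)" .
  qed
  finally show ?thesis .
qed

lemma grid_term_antidiagonal:
  assumes "k \<le> s"
  shows "grid_term k (s - k) = q ^ tri s * (q ^ tri k * inverse (qpoch k) * inverse (qpoch (s - k)))"
proof -
  obtain d where sd: "s = k + d" using assms le_iff_add by blast
  then have "2 * tri k + k * d + tri d = tri s + tri k" using tri_add [of k d] by simp
  then show ?thesis using sd unfolding grid_term_def by (simp add: power_add [symmetric] mult_ac)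
qed

lemma fps_agree_sum_grid_term: "fps_agree n (\<Sum>k\<le>n. \<Sum>m\<le>n. grid_term k m) (\<Sum>s\<le>n. q ^ tri s)"
proof -
  have "fps_agree n (\<Sum>k\<le>n. \<Sum>m\<le>n. grid_term k m) (\<Sum>k\<le>n. \<Sum>m\<le>n - k. grid_term k m)"
  proof (intro fps_agree_sum fps_agree_sum_atMost_drop)
    fix k m assume "n - k < m"
    then have "n < 2 * tri k + k * m + tri m" using le_tri [of k] le_tri [of m] by linarith
    then show "fps_agree n (grid_term k m) 0"
      unfolding grid_term_def by (rule fps_agree_X_power_mult_0)
  qed simp
  also have "(\<Sum>k\<le>n. \<Sum>m\<le>n - k. grid_term k m) = (\<Sum>(k, m)\<in>{(i, j). i + j \<le> n}. grid_term k m)"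
    by (subst sum.Sigma) (auto intro!: sum.cong)
  also have "\<dots> = (\<Sum>s\<le>n. \<Sum>k\<le>s. grid_term k (s - k))"
    by (rule sum.triangle_reindex_eq)
  also have "\<dots> = (\<Sum>s\<le>n. q ^ tri s)"
    by (simp add: grid_term_antidiagonal sum_distrib_left [symmetric] sum_q_tri_inverse_qpoch)
  finally show ?thesis .
qed

lemma sum_q_tri_nth: "(\<Sum>s\<le>n. q ^ tri s) $ n = (if \<exists>s. n = tri s then 1 else 0)"
proof (cases "\<exists>s. n = tri s")
  case True
  then obtain s0 where s0: "n = tri s0" by blast
  have "s0 \<le> n" using s0 le_tri [of s0] by simp
  have "(\<Sum>s\<le>n. q ^ tri s) $ n = (\<Sum>s\<le>n. if s = s0 then 1 else 0)"
    unfolding fps_sum_nth by (rule sum.cong) (auto simp: s0 strict_mono_eq [OF strict_mono_tri])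
  then show ?thesis using True \<open>s0 \<le> n\<close> by simp
qed (auto simp: fps_sum_nth intro!: sum.neutral)

lemma c1_series_nth: "2 * n \<le> N \<Longrightarrow> c1_series n N $ n = (if \<exists>s. n = tri s then 1 else 0)"
  using fps_agree_trans [OF fps_agree_sum_tail_term fps_agree_sum_grid_term]
  by (simp add: c1_series_eq_sum_tail_term fps_agree_def flip: sum_q_tri_nth)

section \<open>Generating functions of multisets with prescribed multiplicities\<close>

text \<open>The series sum_{a in A} X^{i a}, counting the parts equal to i when their
  multiplicity is restricted to A.\<close>
definition mult_gf :: "nat \<Rightarrow> nat set \<Rightarrow> 'a::comm_semiring_1 fps" where
  "mult_gf i A = Abs_fps (\<lambda>m. if i dvd m \<and> m div i \<in> A then 1 else 0)"

definition restricted_msets :: "nat set \<Rightarrow> (nat \<Rightarrow> nat set) \<Rightarrow> nat \<Rightarrow> nat multiset set" where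
  "restricted_msets S A n = {p. set_mset p \<subseteq> S \<and> (\<forall>i\<in>S. count p i \<in> A i) \<and> sum_mset p = n}"

lemma size_le_sum_mset: "(\<forall>x\<in>#p. 0 < x) \<Longrightarrow> size p \<le> sum_mset (p :: nat multiset)"
  by (induct p) auto

lemma count_mult_le_sum_mset: "count p x * x \<le> sum_mset (p :: nat multiset)"
  by (induct p) auto

lemma finite_msets_size_le: "finite S \<Longrightarrow> finite {p. set_mset p \<subseteq> S \<and> size p \<le> n}"
proof -
  assume "finite S"
  have "{p. set_mset p \<subseteq> S \<and> size p \<le> n} \<subseteq> mset ` {xs. set xs \<subseteq> S \<and> length xs \<le> n}"
  proof
    fix p assume "p \<in> {p. set_mset p \<subseteq> S \<and> size p \<le> n}"
    moreover obtain xs where "mset xs = p" using ex_mset by blast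
    ultimately show "p \<in> mset ` {xs. set xs \<subseteq> S \<and> length xs \<le> n}" by auto
  qed
  then show ?thesis using finite_subset finite_lists_length_le [OF \<open>finite S\<close>] by blast
qed

lemma finite_restricted_msets:
  assumes "finite S" "0 \<notin> S"
  shows "finite (restricted_msets S A n)"
proof (rule finite_subset [OF _ finite_msets_size_le [OF assms(1)]])
  show "restricted_msets S A n \<subseteq> {p. set_mset p \<subseteq> S \<and> size p \<le> n}"
  proof
    fix p assume p: "p \<in> restricted_msets S A n"
    have "\<forall>x\<in>#p. 0 < x"
    proof
      fix x assume "x \<in># p"
      then have "x \<in> S" using p by (auto simp: restricted_msets_def)
      then show "0 < x" using assms(2) by (cases x) auto
    qed
    then show "p \<in> {p. set_mset p \<subseteq> S \<and> size p \<le> n}"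
      using p size_le_sum_mset [of p] by (simp add: restricted_msets_def)
  qed
qed

lemma restricted_msets_empty: "restricted_msets {} A n = (if n = 0 then {{#}} else {})"
  by (auto simp: restricted_msets_def)

lemma restricted_msets_insert:
  assumes "s \<notin> S"
  shows "restricted_msets (insert s S) A n = (\<Union>a\<in>{a. a \<in> A s \<and> a * s \<le> n}.
    (\<lambda>r. r + replicate_mset a s) ` restricted_msets S A (n - a * s))"
proof (intro equalityI subsetI)
  fix p assume p: "p \<in> restricted_msets (insert s S) A n"
  define r where "r = {#x \<in># p. x \<noteq> s#}"
  have pr: "p = r + replicate_mset (count p s) s"
    unfolding r_def filter_eq_replicate_mset [symmetric]
    using multiset_partition [of p "\<lambda>x. x \<noteq> s"] by (simp add: add.commute)
  have sum: "sum_mset p = sum_mset r + count p s * s"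
    by (subst pr) simp
  have "r \<in> restricted_msets S A (n - count p s * s)"
    using p assms sum unfolding r_def restricted_msets_def by auto
  moreover have "count p s \<in> A s" "count p s * s \<le> n"
    using p sum by (auto simp: restricted_msets_def)
  ultimately show "p \<in> (\<Union>a\<in>{a. a \<in> A s \<and> a * s \<le> n}.
      (\<lambda>r. r + replicate_mset a s) ` restricted_msets S A (n - a * s))"
    using pr by blast
next
  fix p assume "p \<in> (\<Union>a\<in>{a. a \<in> A s \<and> a * s \<le> n}.
      (\<lambda>r. r + replicate_mset a s) ` restricted_msets S A (n - a * s))"
  then obtain a r where a: "a \<in> A s" "a * s \<le> n" and r: "r \<in> restricted_msets S A (n - a * s)"
    and pr: "p = r + replicate_mset a s" by blast
  have "count r s = 0"
    using r assms unfolding restricted_msets_def by (auto simp: count_eq_zero_iff)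
  then show "p \<in> restricted_msets (insert s S) A n"
    using r a assms unfolding pr restricted_msets_def by auto
qed

lemma card_restricted_msets_insert:
  assumes "finite S" "0 \<notin> insert s S" "s \<notin> S"
  shows "card (restricted_msets (insert s S) A n)
    = (\<Sum>a\<in>{a. a \<in> A s \<and> a * s \<le> n}. card (restricted_msets S A (n - a * s)))"
proof -
  let ?I = "{a. a \<in> A s \<and> a * s \<le> n}"
  let ?R = "\<lambda>a. (\<lambda>r. r + replicate_mset a s) ` restricted_msets S A (n - a * s)"
  have "?I \<subseteq> {..n}"
  proof
    fix a assume a: "a \<in> ?I"
    have "a \<le> a * s" using assms(2) by simp
    also have "\<dots> \<le> n" using a by simp
    finally show "a \<in> {..n}" by simp
  qed
  then have "finite ?I" by (rule finite_subset) simp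
  have no_s: "count r s = 0" if "r \<in> restricted_msets S A m" for r m
    using that assms(3) unfolding restricted_msets_def by (auto simp: count_eq_zero_iff)
  have "card (restricted_msets (insert s S) A n) = (\<Sum>a\<in>?I. card (?R a))"
    unfolding restricted_msets_insert [OF assms(3)]
  proof (rule card_UN_disjoint [OF \<open>finite ?I\<close>])
    show "\<forall>a\<in>?I. finite (?R a)"
      using finite_restricted_msets assms by blast
    show "\<forall>a\<in>?I. \<forall>b\<in>?I. a \<noteq> b \<longrightarrow> ?R a \<inter> ?R b = {}"
    proof (intro ballI impI equals0I)
      fix a b p assume "a \<noteq> b" "p \<in> ?R a \<inter> ?R b"
      then obtain r1 r2 where r1: "r1 \<in> restricted_msets S A (n - a * s)" "p = r1 + replicate_mset a s"
        and r2: "r2 \<in> restricted_msets S A (n - b * s)" "p = r2 + replicate_mset b s"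
        by blast
      have "count p s = a" using r1 by (simp add: no_s)
      moreover have "count p s = b" using r2 by (simp add: no_s)
      ultimately show False using \<open>a \<noteq> b\<close> by simp
    qed
  qed
  also have "\<dots> = (\<Sum>a\<in>?I. card (restricted_msets S A (n - a * s)))"
    by (intro sum.cong refl card_image inj_onI) simp
  finally show ?thesis .
qed

lemma mult_gf_mult_nth:
  fixes f :: "'a::comm_semiring_1 fps"
  assumes "0 < s"
  shows "(mult_gf s B * f) $ n = (\<Sum>a\<in>{a. a \<in> B \<and> a * s \<le> n}. f $ (n - a * s))"
proof -
  have "(mult_gf s B * f) $ n = (\<Sum>k=0..n. (if s dvd k \<and> k div s \<in> B then 1 else 0) * f $ (n - k))"
    by (simp add: fps_mult_nth mult_gf_def)
  also have "\<dots> = (\<Sum>k\<in>{k\<in>{0..n}. s dvd k \<and> k div s \<in> B}. f $ (n - k))"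
    unfolding sum.inter_filter [OF finite_atLeastAtMost] by (rule sum.cong) simp_all
  also have "{k\<in>{0..n}. s dvd k \<and> k div s \<in> B} = (\<lambda>a. a * s) ` {a. a \<in> B \<and> a * s \<le> n}"
    using assms by (auto elim!: dvdE simp: mult.commute)
  also have "(\<Sum>k\<in>(\<lambda>a. a * s) ` {a. a \<in> B \<and> a * s \<le> n}. f $ (n - k))
      = (\<Sum>a\<in>{a. a \<in> B \<and> a * s \<le> n}. f $ (n - a * s))"
    using assms by (subst sum.reindex) (auto intro!: inj_onI)
  finally show ?thesis .
qed

lemma card_restricted_msets:
  "finite S \<Longrightarrow> 0 \<notin> S \<Longrightarrow> of_nat (card (restricted_msets S A n)) = (\<Prod>i\<in>S. mult_gf i (A i)) $ n"
proof (induct S arbitrary: n rule: finite_induct)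
  case (insert s S)
  then show ?case
    by (simp add: card_restricted_msets_insert mult_gf_mult_nth gr0I)
qed (simp add: restricted_msets_empty)

lemma mult_gf_0_1: "0 < i \<Longrightarrow> mult_gf i {0, 1} = (1 + fps_X ^ i :: 'a::comm_ring_1 fps)"
proof (rule fps_ext)
  fix m assume i: "0 < i"
  have "i dvd m \<and> m div i \<in> {0, 1} \<longleftrightarrow> m = 0 \<or> m = i"
    using i by (auto elim!: dvdE)
  then show "mult_gf i {0, 1} $ m = (1 + fps_X ^ i :: 'a fps) $ m"
    using i by (auto simp: mult_gf_def)
qed

lemma mult_gf_ge_2:
  "0 < i \<Longrightarrow> mult_gf i {a. 2 \<le> a} = (fps_X ^ (2 * i) * mult_gf i UNIV :: 'a::comm_ring_1 fps)"
proof (rule fps_ext)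
  fix m assume i: "0 < i"
  have "i dvd m \<and> 2 \<le> m div i \<longleftrightarrow> 2 * i \<le> m \<and> i dvd (m - 2 * i)"
  proof
    assume "i dvd m \<and> 2 \<le> m div i"
    then obtain c where "m = i * c" "2 \<le> c" using i by (auto elim!: dvdE)
    then show "2 * i \<le> m \<and> i dvd (m - 2 * i)"
      by (simp add: diff_mult_distrib2 [symmetric] mult.commute [of 2])
  next
    assume h: "2 * i \<le> m \<and> i dvd (m - 2 * i)"
    then obtain c where "m - 2 * i = i * c" by (auto elim!: dvdE)
    with h have "m = i * (c + 2)" by (simp add: algebra_simps)
    then show "i dvd m \<and> 2 \<le> m div i" using i by simp
  qed
  then show "mult_gf i {a. 2 \<le> a} $ m = (fps_X ^ (2 * i) * mult_gf i UNIV :: 'a fps) $ m"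
    unfolding fps_X_power_mult_nth by (simp add: mult_gf_def not_le)
qed

lemma mult_gf_UNIV: "0 < i \<Longrightarrow> mult_gf i UNIV = inverse (1 + q ^ i)"
proof (intro fps_inverse_unique [symmetric] fps_ext)
  fix m assume i: "0 < i"
  have "((1 + q ^ i) * mult_gf i UNIV) $ m
      = (if i dvd m then 1 else 0) + (if m < i then 0 else if i dvd (m - i) then 1 else 0)"
    unfolding distrib_right fps_add_nth fps_X_power_mult_nth by (simp add: mult_gf_def)
  also have "\<dots> = (1 :: bit fps) $ m"
  proof (cases "m < i")
    case True
    then have "i dvd m \<longleftrightarrow> m = 0" using i by (auto dest: dvd_imp_le)
    then show ?thesis using True by simp
  next
    case False
    then have "i dvd (m - i) \<longleftrightarrow> i dvd m" by (simp add: dvd_minus_self)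
    then show ?thesis using False i by simp
  qed
  finally show "((1 + q ^ i) * mult_gf i UNIV) $ m = (1 :: bit fps) $ m" .
qed

section \<open>Partitions counted by c_1\<close>

definition cond_b_at :: "nat \<Rightarrow> nat multiset \<Rightarrow> bool" where
  "cond_b_at j p \<longleftrightarrow> (\<forall>i. 1 \<le> i \<and> i \<le> 2 * j - 1 \<longrightarrow> count p i \<ge> 2)
    \<and> (\<forall>i. i > 2 * j \<longrightarrow> count p i \<le> 1)"

definition cond_b_mults :: "nat \<Rightarrow> nat \<Rightarrow> nat set" where
  "cond_b_mults j i = (if i < 2 * j then {a. 2 \<le> a} else if i = 2 * j then UNIV else {0, 1})"

lemma cond_b_iff: "cond_b p \<longleftrightarrow> (\<exists>j\<ge>1. cond_b_at j p)"
  unfolding cond_b_def cond_b_at_def by blast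

lemma set_mset_partition_subset: "is_partition n p \<Longrightarrow> set_mset p \<subseteq> {1..n}"
proof
  fix x assume p: "is_partition n p" and x: "x \<in># p"
  then have "0 < x" by (simp add: is_partition_def)
  moreover have "x \<le> count p x * x" using x by (simp add: Suc_le_eq)
  with p have "x \<le> n" using count_mult_le_sum_mset [of p x] unfolding is_partition_def by linarith
  ultimately show "x \<in> {1..n}" by simp
qed

lemma restricted_msets_iff: "p \<in> restricted_msets {1..N} A n
    \<longleftrightarrow> is_partition n p \<and> set_mset p \<subseteq> {1..N} \<and> (\<forall>i\<in>{1..N}. count p i \<in> A i)"
  unfolding restricted_msets_def is_partition_def by auto

lemma partitions_with_mults_eq:
  assumes "n \<le> N" "\<And>p. is_partition n p \<Longrightarrow> P p \<longleftrightarrow> (\<forall>i\<in>{1..N}. count p i \<in> A i)"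
  shows "{p \<in> partitions n. P p} = restricted_msets {1..N} A n"
proof (intro equalityI subsetI)
  fix p assume "p \<in> {p \<in> partitions n. P p}"
  then have p: "is_partition n p" "P p" by (auto simp: partitions_def)
  moreover have "set_mset p \<subseteq> {1..N}"
    using set_mset_partition_subset [OF p(1)] assms(1) by auto
  ultimately show "p \<in> restricted_msets {1..N} A n"
    unfolding restricted_msets_iff using assms(2) by blast
next
  fix p assume "p \<in> restricted_msets {1..N} A n"
  then have "is_partition n p" "\<forall>i\<in>{1..N}. count p i \<in> A i"
    unfolding restricted_msets_iff by blast+
  then show "p \<in> {p \<in> partitions n. P p}"
    using assms(2) unfolding partitions_def by blast
qed

lemma finite_partitions: "finite (partitions n)"
  using partitions_with_mults_eq [of n n "\<lambda>_. True" "\<lambda>_. UNIV"]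
    finite_restricted_msets [of "{1..n}"] by simp

lemma distinct_partitions_eq:
  assumes "n \<le> N"
  shows "{p \<in> partitions n. distinct_parts p} = restricted_msets {1..N} (\<lambda>_. {0, 1}) n"
proof (rule partitions_with_mults_eq [OF assms])
  fix p assume "is_partition n p"
  then have "count p i = 0" if "i \<notin> {1..N}" for i
    using that set_mset_partition_subset [of n p] assms by (auto simp: count_eq_zero_iff)
  then show "distinct_parts p \<longleftrightarrow> (\<forall>i\<in>{1..N}. count p i \<in> {0, 1})"
    unfolding distinct_parts_def by (auto simp: le_Suc_eq)
qed

lemma cond_b_at_partitions_eq:
  assumes "n \<le> N" "2 * j \<le> N" "1 \<le> j"
  shows "{p \<in> partitions n. cond_b_at j p} = restricted_msets {1..N} (cond_b_mults j) n"
proof (rule partitions_with_mults_eq [OF assms(1)])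
  fix p assume "is_partition n p"
  then have outside: "count p i = 0" if "i \<notin> {1..N}" for i
    using that set_mset_partition_subset [of n p] assms(1) by (auto simp: count_eq_zero_iff)
  show "cond_b_at j p \<longleftrightarrow> (\<forall>i\<in>{1..N}. count p i \<in> cond_b_mults j i)"
  proof
    assume "cond_b_at j p"
    then show "\<forall>i\<in>{1..N}. count p i \<in> cond_b_mults j i"
      unfolding cond_b_at_def cond_b_mults_def by (auto simp: le_Suc_eq)
  next
    assume mults: "\<forall>i\<in>{1..N}. count p i \<in> cond_b_mults j i"
    show "cond_b_at j p" unfolding cond_b_at_def
    proof (intro conjI allI impI)
      fix i assume "1 \<le> i \<and> i \<le> 2 * j - 1"
      then have "i \<in> {1..N}" "i < 2 * j" using assms by auto
      then show "2 \<le> count p i"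
        using mults by (metis cond_b_mults_def mem_Collect_eq)
    next
      fix i assume "2 * j < i"
      show "count p i \<le> 1"
      proof (cases "i \<in> {1..N}")
        case True
        then have "count p i \<in> cond_b_mults j i" using mults by blast
        then show ?thesis using \<open>2 * j < i\<close> by (auto simp: cond_b_mults_def)
      qed (simp add: outside)
    qed
  qed
qed

lemma cond_b_at_le: "is_partition n p \<Longrightarrow> cond_b_at j p \<Longrightarrow> 1 \<le> j \<Longrightarrow> j \<le> n"
proof -
  assume p: "is_partition n p" and b: "cond_b_at j p" and j: "1 \<le> j"
  have "2 \<le> count p (2 * j - 1)" using b j unfolding cond_b_at_def by auto
  then have "2 * (2 * j - 1) \<le> count p (2 * j - 1) * (2 * j - 1)" by (rule mult_right_mono) simp
  also have "\<dots> \<le> n" using count_mult_le_sum_mset [of p "2 * j - 1"] p by (simp add: is_partition_def)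
  finally show "j \<le> n" using j by linarith
qed

lemma cond_b_at_unique: "cond_b_at j p \<Longrightarrow> cond_b_at j' p \<Longrightarrow> j = j'"
proof (rule ccontr)
  assume "cond_b_at j p" "cond_b_at j' p" "j \<noteq> j'"
  then obtain a b where "cond_b_at a p" "cond_b_at b p" "a < b"
    by (metis nat_neq_iff)
  then have "2 \<le> count p (2 * a + 1)" "count p (2 * a + 1) \<le> 1"
    unfolding cond_b_at_def by auto
  then show False by simp
qed

lemma not_distinct_parts_if_cond_b_at:
  assumes "cond_b_at (Suc i) p"
  shows "\<not> distinct_parts p"
proof
  assume "distinct_parts p"
  with assms have "2 \<le> count p 1" "count p 1 \<le> 1"
    unfolding cond_b_at_def distinct_parts_def by auto
  then show False by simp
qed

lemma c1_partitions_eq: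
  "{p \<in> partitions n. distinct_parts p \<or> cond_b p} =
     {p \<in> partitions n. distinct_parts p} \<union> (\<Union>i<n. {p \<in> partitions n. cond_b_at (Suc i) p})"
proof -
  have "cond_b p \<longleftrightarrow> (\<exists>i<n. cond_b_at (Suc i) p)" if p: "is_partition n p" for p
  proof
    assume "cond_b p"
    then obtain j where j: "1 \<le> j" "cond_b_at j p" by (auto simp: cond_b_iff)
    moreover have "j \<le> n" using cond_b_at_le [OF p j(2,1)] .
    ultimately show "\<exists>i<n. cond_b_at (Suc i) p" by (intro exI [of _ "j - 1"]) simp
  qed (auto simp: cond_b_iff)
  then show ?thesis by (auto simp: partitions_def)
qed

lemma c1_eq_card_sum:
  "c1 n = card {p \<in> partitions n. distinct_parts p}
    + (\<Sum>i<n. card {p \<in> partitions n. cond_b_at (Suc i) p})"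
proof -
  let ?B = "\<lambda>i. {p \<in> partitions n. cond_b_at (Suc i) p}"
  have "card (\<Union>i<n. ?B i) = (\<Sum>i<n. card (?B i))"
    by (rule card_UN_disjoint) (auto simp: finite_partitions dest: cond_b_at_unique)
  moreover have "{p \<in> partitions n. distinct_parts p} \<inter> (\<Union>i<n. ?B i) = {}"
    using not_distinct_parts_if_cond_b_at by blast
  ultimately show ?thesis
    unfolding c1_def c1_partitions_eq by (simp add: card_Un_disjoint finite_partitions)
qed

lemma prod_mult_gf_distinct: "(\<Prod>i\<in>{1..N}. mult_gf i {0, 1}) = qpoch N"
  unfolding qpoch_def by (rule prod.cong [OF refl], rule mult_gf_0_1) simp

lemma prod_mult_gf_cond_b:
  assumes "2 * i + 2 \<le> N"
  shows "(\<Prod>l\<in>{1..N}. mult_gf l (cond_b_mults (Suc i) l))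
    = q ^ (2 * tri (2 * i + 1)) * qpoch_tail (2 * i + 2) N * inverse (qpoch (2 * i + 2))"
proof -
  let ?f = "\<lambda>l. mult_gf l (cond_b_mults (Suc i) l) :: bit fps"
  have "{1..N} = {1..2 * i + 2} \<union> {Suc (2 * i + 2)..N}" using assms by auto
  then have "(\<Prod>l\<in>{1..N}. ?f l) = (\<Prod>l\<in>{1..2 * i + 2}. ?f l) * (\<Prod>l\<in>{Suc (2 * i + 2)..N}. ?f l)"
    by (simp add: prod.union_disjoint)
  also have "(\<Prod>l\<in>{Suc (2 * i + 2)..N}. ?f l) = qpoch_tail (2 * i + 2) N"
    unfolding qpoch_tail_def
  proof (rule prod.cong [OF refl])
    fix l assume "l \<in> {Suc (2 * i + 2)..N}"
    then have "cond_b_mults (Suc i) l = {0, 1}" "0 < l" by (auto simp: cond_b_mults_def)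
    then show "?f l = 1 + q ^ l" by (metis mult_gf_0_1)
  qed
  also have "(\<Prod>l\<in>{1..2 * i + 2}. ?f l) = (\<Prod>l\<in>{1..2 * i + 1}. ?f l) * ?f (2 * i + 2)"
    by (simp add: cond_b_mults_def)
  also have "?f (2 * i + 2) = inverse (1 + q ^ (2 * i + 2))"
    by (simp add: cond_b_mults_def mult_gf_UNIV)
  also have "(\<Prod>l\<in>{1..2 * i + 1}. ?f l) = (\<Prod>l\<in>{1..2 * i + 1}. q ^ (2 * l) * inverse (1 + q ^ l))"
    by (rule prod.cong [OF refl]) (auto simp: cond_b_mults_def mult_gf_ge_2 mult_gf_UNIV)
  also have "\<dots> = q ^ (2 * tri (2 * i + 1)) * inverse (qpoch (2 * i + 1))"
    by (simp only: prod.distrib power_sum [symmetric] inverse_prod_fps [symmetric] qpoch_def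
        sum_double_eq_tri)
  finally show ?thesis
    using inverse_qpoch_Suc [of "2 * i + 1"] by (simp add: mult_ac)
qed

lemma c1_mod_2: "(of_nat (c1 n) :: bit) = c1_series n (2 * n) $ n"
proof -
  have le: "n \<le> 2 * n" by simp
  have "(of_nat (card {p \<in> partitions n. distinct_parts p}) :: bit)
      = (\<Prod>i\<in>{1..2 * n}. mult_gf i {0, 1}) $ n"
    unfolding distinct_partitions_eq [OF le] by (rule card_restricted_msets) auto
  then have "(of_nat (card {p \<in> partitions n. distinct_parts p}) :: bit) = qpoch (2 * n) $ n"
    by (simp only: prod_mult_gf_distinct)
  moreover have "(of_nat (card {p \<in> partitions n. cond_b_at (Suc i) p}) :: bit)
      = (q ^ (2 * tri (2 * i + 1)) * qpoch_tail (2 * i + 2) (2 * n) * inverse (qpoch (2 * i + 2))) $ n"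
    if "i < n" for i
  proof -
    have le: "n \<le> 2 * n" "2 * Suc i \<le> 2 * n" "1 \<le> Suc i" using that by simp_all
    have "(of_nat (card {p \<in> partitions n. cond_b_at (Suc i) p}) :: bit)
        = (\<Prod>l\<in>{1..2 * n}. mult_gf l (cond_b_mults (Suc i) l)) $ n"
      unfolding cond_b_at_partitions_eq [OF le] by (rule card_restricted_msets) auto
    also have "\<dots> = (q ^ (2 * tri (2 * i + 1)) * qpoch_tail (2 * i + 2) (2 * n)
        * inverse (qpoch (2 * i + 2))) $ n"
      using that by (subst prod_mult_gf_cond_b) simp_all
    finally show ?thesis .
  qed
  ultimately show ?thesis
    by (simp add: c1_eq_card_sum c1_series_def fps_sum_nth)
qed

theorem theorem1:
  fixes n :: nat
  shows "odd (c1 n) \<longleftrightarrow> (\<exists>j::nat. n = j * (j + 1) div 2)"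
proof -
  have "(of_nat (c1 n) :: bit) = (if \<exists>s. n = tri s then 1 else 0)"
    using c1_mod_2 [of n] c1_series_nth [of n "2 * n"] by simp
  then show ?thesis
    by (auto simp: of_nat_bit tri_def split: if_splits)
qed

end
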